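(* For every $\theta=(\theta_1,\theta_2)\in\Theta$ and each $i\in\{1,2\}$, the smallest PSNE Pareto dominates the largest PSNE of $\mathcal{G}_\theta$: $$c_i\big(\theta_i,\underline{\mathbf a}^*(\theta)\big)\le c_i\big(\theta_i,\overline{\mathbf a}^*(\theta)\big).$$
   Context: Fix an integer $A_m\ge 1$, a weight $w>0$, and for $i\in\{1,2\}$ a finite set $\Theta_i\subset(0,\infty)$ of SNR values; let $\Theta=\Theta_1\times\Theta_2$, and write $-i$ for the index in $\{1,2\}\setminus\{i\}$. Let $c_e:(0,\infty)\times\{0,\dots,A_m\}\to\mathbb{R}_{+}$ be an arbitrary function. For each $\theta=(\theta_1,\theta_2)\in\Theta$, the two-player game $\mathcal{G}_\theta$ has strategy sets $\mathcal{A}_1=\mathcal{A}_2=\{0,1,\dots,A_m\}$ (profiles $\mathbf a=(a_1,a_2)$ ordered componentwise) and player $i$ minimizes the cost $$c_i(\theta_i,a_i,a_{-i})=w\,c_e(\theta_i,a_i)+\frac{1}{a_i+1}+\frac{a_{-i}}{a_i+1}.$$ A profile $\mathbf a^*$ is a pure strategy Nash equilibrium (PSNE) of $\mathcal{G}_\theta$ if $c_i(\theta_i,a_i^*,a_{-i}^* )\le c_i(\theta_i,a_i,a_{-i}^* )$ for all $i$ and all $a_i\in\mathcal{A}_i$. The set of PSNEs of $\mathcal{G}_\theta$ has a componentwise largest element $\overline{\mathbf a}^*(\theta)$ and a componentwise smallest element $\underline{\mathbf a}^*(\theta)$; $c_i(\theta_i,\mathbf a)$ means $c_i(\theta_i,a_i,a_{-i})$.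 *)

theory Defs
  imports Main Complex_Main
begin

definition cost :: "real \<Rightarrow> (real \<Rightarrow> nat \<Rightarrow> real) \<Rightarrow> real \<Rightarrow> nat \<Rightarrow> nat \<Rightarrow> real" where
  "cost w ce th ai aj = w * ce th ai + 1 / (real ai + 1) + real aj / (real ai + 1)"

definition PSNE :: "nat \<Rightarrow> real \<Rightarrow> (real \<Rightarrow> nat \<Rightarrow> real) \<Rightarrow> real \<Rightarrow> real \<Rightarrow> (nat \<times> nat) set" where
  "PSNE Am w ce th1 th2 = {(a1, a2). a1 \<le> Am \<and> a2 \<le> Am \<and>
     (\<forall>b \<le> Am. cost w ce th1 a1 a2 \<le> cost w ce th1 b a2) \<and>
     (\<forall>b \<le> Am. cost w ce th2 a2 a1 \<le> cost w ce th2 b a1)}"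

end

theory Submission
  imports Defs
begin

text \<open>A player's cost is increasing in the opponent's action. At the smallest equilibrium each
  player best-responds to an opponent action no larger than at the largest equilibrium, so its
  cost there is at most what its largest-equilibrium action would cost against the smaller
  opponent action, which in turn is at most its cost at the largest equilibrium.\<close>

lemma cost_mono_opponent:
  assumes "aj \<le> aj'"
  shows "cost w ce th ai aj \<le> cost w ce th ai aj'"
  using assms unfolding cost_def by (simp add: divide_right_mono)

lemma best_response_cost_le:
  assumes best: "\<forall>b \<le> Am. cost w ce th a aj \<le> cost w ce th b aj"
    and "a' \<le> Am" and "aj \<le> aj'"
  shows "cost w ce th a aj \<le> cost w ce th a' aj'"
  using best assms(2) cost_mono_opponent[OF assms(3)] by (meson order_trans)

lemma PSNE_iff:
  "(a1, a2) \<in> PSNE Am w ce th1 th2 \<longleftrightarrow> a1 \<le> Am \<and> a2 \<le> Am \<and>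
     (\<forall>b \<le> Am. cost w ce th1 a1 a2 \<le> cost w ce th1 b a2) \<and>
     (\<forall>b \<le> Am. cost w ce th2 a2 a1 \<le> cost w ce th2 b a1)"
  unfolding PSNE_def by simp

theorem theorem2:
  fixes Am :: nat and w :: real and ce :: "real \<Rightarrow> nat \<Rightarrow> real"
    and \<Theta>1 \<Theta>2 :: "real set" and th1 th2 :: real
    and lo1 lo2 hi1 hi2 :: nat
  assumes "Am \<ge> 1" and "w > 0"
    and "finite \<Theta>1" and "\<Theta>1 \<subseteq> {0<..}" and "finite \<Theta>2" and "\<Theta>2 \<subseteq> {0<..}"
    and "\<forall>t > 0. \<forall>a \<le> Am. ce t a \<ge> 0"
    and "th1 \<in> \<Theta>1" and "th2 \<in> \<Theta>2"
    and lo: "(lo1, lo2) \<in> PSNE Am w ce th1 th2"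
      "\<forall>(b1, b2) \<in> PSNE Am w ce th1 th2. lo1 \<le> b1 \<and> lo2 \<le> b2"
    and hi: "(hi1, hi2) \<in> PSNE Am w ce th1 th2"
      "\<forall>(b1, b2) \<in> PSNE Am w ce th1 th2. b1 \<le> hi1 \<and> b2 \<le> hi2"
  shows "cost w ce th1 lo1 lo2 \<le> cost w ce th1 hi1 hi2
       \<and> cost w ce th2 lo2 lo1 \<le> cost w ce th2 hi2 hi1"
proof -
  have lo_best: "\<forall>b \<le> Am. cost w ce th1 lo1 lo2 \<le> cost w ce th1 b lo2"
      "\<forall>b \<le> Am. cost w ce th2 lo2 lo1 \<le> cost w ce th2 b lo1"
    using lo(1) by (simp_all add: PSNE_iff)
  have hi_feasible: "hi1 \<le> Am" "hi2 \<le> Am"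
    using hi(1) by (simp_all add: PSNE_iff)
  have lo_le_hi: "lo1 \<le> hi1" "lo2 \<le> hi2"
    using lo(2) hi(1) by auto
  show ?thesis
    using best_response_cost_le[OF lo_best(1) hi_feasible(1) lo_le_hi(2)]
      best_response_cost_le[OF lo_best(2) hi_feasible(2) lo_le_hi(1)]
    by simp
qed

end
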